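(* Let $\rho$ be a two-qubit state, with $\vec{x}\in\mathbb{R}^3$, $\vec{y}\in\mathbb{R}^3$ and $T\in\mathbb{R}^{3\times 3}$ defined by $x_i=\mathrm{Tr}[\rho(\sigma_i\otimes\mathbb{1})]$, $y_j=\mathrm{Tr}[\rho(\mathbb{1}\otimes\sigma_j)]$ and $T_{ij}=\mathrm{Tr}[\rho(\sigma_i\otimes\sigma_j)]$. For unit vectors $\vec{\ell}\in\mathbb{R}^3$ define $$\lambda_M(\vec{\ell}\,)=(\vec{y}\cdot\vec{\ell}\,)^2+\tfrac12\Big[|\vec{x}|^2+|T\vec{\ell}\,|^2+\sqrt{(|\vec{x}|^2-|T\vec{\ell}\,|^2)^2+4(\vec{x}\cdot T\vec{\ell}\,)^2}\Big],$$ and for unit vectors $\vec{k}\in\mathbb{R}^3$ define $$\lambda_N(\vec{k}\,)=(\vec{x}\cdot\vec{k}\,)^2+\tfrac12\Big[|\vec{y}|^2+|T^T\vec{k}\,|^2+\sqrt{(|\vec{y}|^2-|T^T\vec{k}\,|^2)^2+4(\vec{y}\cdot T^T\vec{k}\,)^2}\Big].$$ Then $\max_{|\vec{\ell}|=1}\lambda_M(\vec{\ell}\,)=\max_{|\vec{k}|=1}\lambda_N(\vec{k}\,)$, and, denoting this common value by $\lambda^{\max}$, $$G(\rho)=\tfrac14\Big[|\vec{x}|^2+|\vec{y}|^2+\|T\|^2-\lambda^{\max}\Big],$$ where $\|T\|^2=\sum_{i,j}T_{ij}^2$.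
   Context: $\sigma_1,\sigma_2,\sigma_3$ are the Pauli matrices and $\mathbb{1}$ the $2\times 2$ identity. The Hilbert–Schmidt distance is $D(M,N)=\sqrt{\mathrm{Tr}[(M-N)(M-N)^\dagger]}$. For unit vectors $\vec{k},\vec{\ell}\in\mathbb{R}^3$ let $\Pi^A_\pm=\frac12(\mathbb{1}\pm\vec{k}\cdot\vec{\sigma})$ and $\Pi^B_\pm=\frac12(\mathbb{1}\pm\vec{\ell}\cdot\vec{\sigma})$ be von Neumann measurements on qubits $A$ and $B$, and let $\chi_{\vec{k},\vec{\ell}}=\sum_{i,j\in\{+,-\}}(\Pi^A_i\otimes\Pi^B_j)\rho(\Pi^A_i\otimes\Pi^B_j)$ be the measurement-induced classical-classical state. The symmetric geometric measure of quantum correlation is $G(\rho)=\min_{\vec{k},\vec{\ell}}D^2(\rho,\chi_{\vec{k},\vec{\ell}})$, the minimum over all pairs of unit vectors. *)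

theory Defs
  imports "HOL-Analysis.Analysis"
begin

type_synonym qop = "complex^2^2"
type_synonym qqop = "complex^(2\<times>2)^(2\<times>2)"

definition sigma1 :: qop where
  "sigma1 = (\<chi> i j. if i \<noteq> j then 1 else 0)"
definition sigma2 :: qop where
  "sigma2 = (\<chi> i j. if i = 1 \<and> j = 2 then - \<i> else if i = 2 \<and> j = 1 then \<i> else 0)"
definition sigma3 :: qop where
  "sigma3 = (\<chi> i j. if i = j then (if i = 1 then 1 else -1) else 0)"

definition pauli :: "3 \<Rightarrow> qop" where
  "pauli i = (if i = 1 then sigma1 else if i = 2 then sigma2 else sigma3)"

definition cscale :: "complex \<Rightarrow> complex^'n^'m \<Rightarrow> complex^'n^'m" where
  "cscale c M = (\<chi> i j. c * M$i$j)"

definition ctrace :: "complex^'n^'n \<Rightarrow> complex" where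
  "ctrace M = (\<Sum>i\<in>UNIV. M$i$i)"

definition adjoint :: "complex^'n^'m \<Rightarrow> complex^'m^'n" where
  "adjoint M = (\<chi> i j. cnj (M$j$i))"

definition kron :: "qop \<Rightarrow> qop \<Rightarrow> qqop" where
  "kron A B = (\<chi> p q. A$(fst p)$(fst q) * B$(snd p)$(snd q))"

definition hermitian :: "complex^'n^'n \<Rightarrow> bool" where
  "hermitian M \<longleftrightarrow> adjoint M = M"

definition psd :: "complex^'n^'n \<Rightarrow> bool" where
  "psd M \<longleftrightarrow> hermitian M \<and>
     (\<forall>v :: complex^'n. let q = (\<Sum>i\<in>UNIV. \<Sum>j\<in>UNIV. cnj (v$i) * M$i$j * v$j)
                          in Im q = 0 \<and> Re q \<ge> 0)"

definition two_qubit_state :: "qqop \<Rightarrow> bool" where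
  "two_qubit_state \<rho> \<longleftrightarrow> psd \<rho> \<and> ctrace \<rho> = 1"

definition HS_dist_sq :: "complex^'n^'n \<Rightarrow> complex^'n^'n \<Rightarrow> real" where
  "HS_dist_sq M N = Re (ctrace ((M - N) ** adjoint (M - N)))"

definition HS_dist :: "complex^'n^'n \<Rightarrow> complex^'n^'n \<Rightarrow> real" where
  "HS_dist M N = sqrt (HS_dist_sq M N)"

definition dot_sigma :: "real^3 \<Rightarrow> qop" where
  "dot_sigma k = (\<Sum>i\<in>UNIV. cscale (complex_of_real (k$i)) (pauli i))"

definition proj :: "real^3 \<Rightarrow> bool \<Rightarrow> qop" where
  "proj k s = cscale (1/2) (mat 1 + cscale (if s then 1 else -1) (dot_sigma k))"

definition chi_cc :: "qqop \<Rightarrow> real^3 \<Rightarrow> real^3 \<Rightarrow> qqop" where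
  "chi_cc \<rho> k l = (\<Sum>s\<in>UNIV. \<Sum>t\<in>UNIV.
      kron (proj k s) (proj l t) ** \<rho> ** kron (proj k s) (proj l t))"

definition G :: "qqop \<Rightarrow> real" where
  "G \<rho> = Inf {HS_dist \<rho> (chi_cc \<rho> k l) ^ 2 | k l. norm k = 1 \<and> norm l = 1}"

definition bloch_x :: "qqop \<Rightarrow> real^3" where
  "bloch_x \<rho> = (\<chi> i. Re (ctrace (\<rho> ** kron (pauli i) (mat 1))))"
definition bloch_y :: "qqop \<Rightarrow> real^3" where
  "bloch_y \<rho> = (\<chi> j. Re (ctrace (\<rho> ** kron (mat 1) (pauli j))))"
definition corr_T :: "qqop \<Rightarrow> real^3^3" where
  "corr_T \<rho> = (\<chi> i j. Re (ctrace (\<rho> ** kron (pauli i) (pauli j))))"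

definition lambda_M :: "qqop \<Rightarrow> real^3 \<Rightarrow> real" where
  "lambda_M \<rho> l = (let x = bloch_x \<rho>; y = bloch_y \<rho>; Tl = corr_T \<rho> *v l in
     (y \<bullet> l)^2 + (1/2) * (norm x ^ 2 + norm Tl ^ 2
        + sqrt ((norm x ^ 2 - norm Tl ^ 2)^2 + 4 * (x \<bullet> Tl)^2)))"

definition lambda_N :: "qqop \<Rightarrow> real^3 \<Rightarrow> real" where
  "lambda_N \<rho> k = (let x = bloch_x \<rho>; y = bloch_y \<rho>; Tk = transpose (corr_T \<rho>) *v k in
     (x \<bullet> k)^2 + (1/2) * (norm y ^ 2 + norm Tk ^ 2
        + sqrt ((norm y ^ 2 - norm Tk ^ 2)^2 + 4 * (y \<bullet> Tk)^2)))"

end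

theory Submission
  imports Defs
begin

text \<open>Expanding \<rho> in the product Pauli basis,
  \<rho> = (1 \<otimes> 1 + \<Sum>i x_i \<sigma>_i \<otimes> 1 + \<Sum>j y_j 1 \<otimes> \<sigma>_j + \<Sum>i j T_ij \<sigma>_i \<otimes> \<sigma>_j) / 4,
  the local dephasings along k and l keep only the components of x, y and T along k, l and
  k l^T. Hence D^2(\<rho>, \<chi>_k,l) = (|x|^2 + |y|^2 + \<parallel>T\<parallel>^2 - F(k,l)) / 4 with
  F(k,l) = (x \<bullet> k)^2 + (y \<bullet> l)^2 + (k \<bullet> T l)^2.
  For fixed l, F is (y \<bullet> l)^2 plus the quadratic form of the rank-two operator
  k \<mapsto> (x \<bullet> k) x + (T l \<bullet> k) T l, whose largest eigenvalue has a closed form; so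
  max_k F(k,l) = \<lambda>_M(l), and symmetrically max_l F(k,l) = \<lambda>_N(k).
  Both are therefore the maximum of F over pairs of unit vectors, and minimising D^2 gives G.\<close>

lemma nonneg_quadratic_form:
  fixes \<alpha> \<beta> c p q :: real
  assumes "0 \<le> \<alpha>" "0 \<le> \<beta>" "\<alpha> * \<beta> = c\<^sup>2"
  shows "0 \<le> \<alpha> * p\<^sup>2 - 2 * c * p * q + \<beta> * q\<^sup>2"
proof (cases "\<alpha> = 0")
  case True
  with assms show ?thesis by simp
next
  case False
  with assms(1) have "0 < \<alpha>" by simp
  moreover have "\<alpha> * (\<alpha> * p\<^sup>2 - 2 * c * p * q + \<beta> * q\<^sup>2) = (\<alpha> * p - c * q)\<^sup>2"
    using assms(3) by (simp add: power2_eq_square algebra_simps)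
  ultimately show ?thesis by (metis zero_le_mult_iff zero_le_power2 not_le)
qed

text \<open>The larger eigenvalue of the Gram matrix of a and v, which is the largest eigenvalue of the
  operator k \<mapsto> (a \<bullet> k) a + (v \<bullet> k) v.\<close>
definition gram_max_eig :: "'a::real_inner \<Rightarrow> 'a \<Rightarrow> real" where
  "gram_max_eig a v =
     (1/2) * (norm a ^ 2 + norm v ^ 2 + sqrt ((norm a ^ 2 - norm v ^ 2)^2 + 4 * (a \<bullet> v)^2))"

lemma gram_max_eig_secular:
  fixes a v :: "'a::real_inner"
  defines "L \<equiv> gram_max_eig a v"
  shows "a \<bullet> a \<le> L" "v \<bullet> v \<le> L" "(L - a \<bullet> a) * (L - v \<bullet> v) = (a \<bullet> v)\<^sup>2"
proof -
  define R where "R = sqrt ((a \<bullet> a - v \<bullet> v)\<^sup>2 + 4 * (a \<bullet> v)\<^sup>2)"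
  have L: "L = (a \<bullet> a + v \<bullet> v + R) / 2"
    by (simp add: L_def gram_max_eig_def R_def power2_norm_eq_inner)
  have "\<bar>a \<bullet> a - v \<bullet> v\<bar> \<le> R"
    unfolding R_def by (rule real_le_rsqrt) simp
  then show "a \<bullet> a \<le> L" "v \<bullet> v \<le> L"
    unfolding L by auto
  have "R\<^sup>2 = (a \<bullet> a - v \<bullet> v)\<^sup>2 + 4 * (a \<bullet> v)\<^sup>2"
    unfolding R_def by simp
  then show "(L - a \<bullet> a) * (L - v \<bullet> v) = (a \<bullet> v)\<^sup>2"
    unfolding L by (simp add: power2_eq_square field_simps)
qed

lemma sq_inner_add_sq_inner_le_gram_max_eig:
  fixes a v k :: "'a::real_inner"
  assumes "norm k = 1"
  shows "(a \<bullet> k)\<^sup>2 + (v \<bullet> k)\<^sup>2 \<le> gram_max_eig a v"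
proof -
  define L where "L = gram_max_eig a v"
  define p where "p = a \<bullet> k"
  define q where "q = v \<bullet> k"
  define w where "w = p *\<^sub>R a + q *\<^sub>R v"
  define s where "s = p\<^sup>2 + q\<^sup>2"
  have "s = w \<bullet> k"
    by (simp add: s_def w_def p_def q_def inner_add_left power2_eq_square)
  then have "s\<^sup>2 \<le> w \<bullet> w"
    using Cauchy_Schwarz_ineq[of w k] assms by (simp add: norm_eq_1)
  also have "w \<bullet> w = p\<^sup>2 * (a \<bullet> a) + 2 * p * q * (a \<bullet> v) + q\<^sup>2 * (v \<bullet> v)"
    by (simp add: w_def inner_add_left inner_add_right inner_commute power2_eq_square algebra_simps)
  also have "\<dots> \<le> L * s"
  proof -
    have "0 \<le> (L - a \<bullet> a) * p\<^sup>2 - 2 * (a \<bullet> v) * p * q + (L - v \<bullet> v) * q\<^sup>2"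
      by (rule nonneg_quadratic_form) (simp_all add: L_def gram_max_eig_secular)
    then show ?thesis
      by (simp add: s_def algebra_simps)
  qed
  finally have "s\<^sup>2 \<le> L * s" .
  moreover have "0 \<le> L"
    unfolding L_def by (rule order_trans[OF inner_ge_zero gram_max_eig_secular(2)])
  moreover have "0 \<le> s"
    by (simp add: s_def)
  ultimately have "s \<le> L"
    by (cases "s = 0") (auto simp: power2_eq_square intro: mult_right_le_imp_le)
  then show ?thesis
    by (simp add: s_def p_def q_def L_def)
qed

lemma gram_max_eig_eigenvector:
  fixes a v :: "'a::real_inner"
  defines "L \<equiv> gram_max_eig a v"
  defines "u \<equiv> (a \<bullet> v) *\<^sub>R a + (L - a \<bullet> a) *\<^sub>R v"
  assumes "a \<bullet> a < L"
  shows "u \<noteq> 0" "(a \<bullet> u)\<^sup>2 + (v \<bullet> u)\<^sup>2 = L * (u \<bullet> u)"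
proof -
  define \<alpha> where "\<alpha> = L - a \<bullet> a"
  have "0 < \<alpha>" "0 < L"
    using assms(3) inner_ge_zero[of a] unfolding \<alpha>_def by linarith+
  have au: "a \<bullet> u = (a \<bullet> v) * L"
    by (simp add: u_def inner_add_right algebra_simps)
  have vu: "v \<bullet> u = \<alpha> * L"
    using gram_max_eig_secular(3)[of a v]
    by (simp add: u_def \<alpha>_def L_def inner_add_right inner_commute power2_eq_square algebra_simps)
  have "u \<bullet> u = (a \<bullet> v) * (a \<bullet> u) + \<alpha> * (v \<bullet> u)"
    unfolding u_def \<alpha>_def by (simp add: inner_add_left)
  then have uu: "u \<bullet> u = L * ((a \<bullet> v)\<^sup>2 + \<alpha>\<^sup>2)"
    by (simp add: au vu power2_eq_square algebra_simps)
  have "0 < (a \<bullet> v)\<^sup>2 + \<alpha>\<^sup>2"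
    using \<open>0 < \<alpha>\<close> by (simp add: add_nonneg_pos)
  with \<open>0 < L\<close> have "0 < u \<bullet> u"
    by (simp add: uu)
  then show "u \<noteq> 0" by auto
  show "(a \<bullet> u)\<^sup>2 + (v \<bullet> u)\<^sup>2 = L * (u \<bullet> u)"
    by (simp add: au vu uu power2_eq_square algebra_simps)
qed

lemma gram_max_eig_attained:
  fixes a v :: "'a::euclidean_space"
  obtains k where "norm k = 1" "(a \<bullet> k)\<^sup>2 + (v \<bullet> k)\<^sup>2 = gram_max_eig a v"
proof -
  define L where "L = gram_max_eig a v"
  have "\<exists>k. norm k = 1 \<and> (a \<bullet> k)\<^sup>2 + (v \<bullet> k)\<^sup>2 = L"
  proof (cases "a \<bullet> a < L")
    case True
    obtain u where "u \<noteq> 0" "(a \<bullet> u)\<^sup>2 + (v \<bullet> u)\<^sup>2 = L * (u \<bullet> u)"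
      using gram_max_eig_eigenvector True unfolding L_def by blast
    then have "norm (u /\<^sub>R norm u) = 1 \<and> (a \<bullet> (u /\<^sub>R norm u))\<^sup>2 + (v \<bullet> (u /\<^sub>R norm u))\<^sup>2 = L"
      by (simp add: dot_square_norm power_mult_distrib power_inverse field_simps flip: distrib_left)
    then show ?thesis ..
  next
    case False
    with gram_max_eig_secular[of a v] have "L = a \<bullet> a" "a \<bullet> v = 0"
      by (simp_all add: L_def)
    show ?thesis
    proof (cases "a = 0")
      case True
      with \<open>L = a \<bullet> a\<close> gram_max_eig_secular(2)[of v a] have "v = 0"
        by (metis L_def inner_gt_zero_iff inner_zero_left not_le)
      obtain b :: 'a where "b \<in> Basis" using nonempty_Basis by blast
      with \<open>a = 0\<close> \<open>v = 0\<close> \<open>L = a \<bullet> a\<close> show ?thesis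
        by (auto intro!: exI[of _ b])
    next
      case False
      with \<open>L = a \<bullet> a\<close> \<open>a \<bullet> v = 0\<close>
      have "norm (a /\<^sub>R norm a) = 1 \<and> (a \<bullet> (a /\<^sub>R norm a))\<^sup>2 + (v \<bullet> (a /\<^sub>R norm a))\<^sup>2 = L"
        by (simp add: inner_commute dot_square_norm power2_eq_square field_simps)
      then show ?thesis ..
    qed
  qed
  with that show ?thesis by (auto simp: L_def)
qed

lemma norm_diff_proj_sq:
  fixes x u :: "'a::real_inner"
  assumes "norm u = 1"
  shows "norm (x - (x \<bullet> u) *\<^sub>R u) ^ 2 = norm x ^ 2 - (x \<bullet> u)\<^sup>2"
  using assms unfolding power2_norm_eq_inner
  by (simp add: inner_diff_left inner_diff_right inner_commute norm_eq_1 power2_eq_square)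

lemma norm_sq_vec: "norm (x :: real^'n) ^ 2 = (\<Sum>i\<in>UNIV. (x $ i)\<^sup>2)"
  unfolding power2_norm_eq_inner by (simp add: inner_vec_def power2_eq_square)

lemma norm_sq_matrix: "norm (T :: real^'m^'n) ^ 2 = (\<Sum>i\<in>UNIV. \<Sum>j\<in>UNIV. (T $ i $ j)\<^sup>2)"
  unfolding power2_norm_eq_inner by (simp add: inner_vec_def power2_eq_square)

definition outer :: "real^'n \<Rightarrow> real^'m \<Rightarrow> real^'m^'n" where
  "outer k l = (\<chi> i j. k $ i * l $ j)"

lemma inner_outer: "T \<bullet> outer k l = k \<bullet> (T *v l)"
  by (simp add: outer_def inner_vec_def matrix_vector_mult_def sum_distrib_left algebra_simps)

lemma norm_outer: "norm (outer k l) = norm k * norm l"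
proof -
  have "norm (outer k l) ^ 2 = (norm k * norm l) ^ 2"
    by (simp add: norm_sq_matrix norm_sq_vec outer_def power_mult_distrib sum_product)
  then show ?thesis by simp
qed

lemma sum_UNIV_2x2: "sum f (UNIV :: (2 \<times> 2) set) = f (1,1) + f (1,2) + f (2,1) + f (2,2)"
proof -
  have "sum f (UNIV :: (2 \<times> 2) set) = (\<Sum>a\<in>UNIV. \<Sum>b\<in>UNIV. f (a,b))"
    by (simp add: sum.cartesian_product flip: UNIV_Times_UNIV)
  then show ?thesis by (simp add: sum_2 algebra_simps)
qed

lemma forall_2x2: "(\<forall>p :: 2 \<times> 2. P p) \<longleftrightarrow> P (1,1) \<and> P (1,2) \<and> P (2,1) \<and> P (2,2)"
  by (simp only: split_paired_All forall_2) blast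

lemma hermitian_entry: "hermitian M \<Longrightarrow> M $ q $ p = cnj (M $ p $ q)"
  unfolding hermitian_def adjoint_def by (metis vec_lambda_beta)

lemma HS_norm_sq_entries:
  "Re (ctrace (M ** adjoint M)) = (\<Sum>p\<in>UNIV. \<Sum>q\<in>UNIV. (Re (M $ p $ q))\<^sup>2 + (Im (M $ p $ q))\<^sup>2)"
  unfolding ctrace_def matrix_matrix_mult_def adjoint_def
  by (simp add: Re_sum power2_eq_square)

lemma HS_dist_sq_nonneg: "0 \<le> HS_dist_sq M N"
  unfolding HS_dist_sq_def HS_norm_sq_entries by (intro sum_nonneg) simp

lemma matrix_add_rdistrib: "(B + C) ** A = B ** A + C ** A"
  by (simp add: vec_eq_iff matrix_matrix_mult_def sum.distrib algebra_simps)

lemma cscale_mult_left: "cscale c A ** B = cscale c (A ** B)"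
  by (simp add: vec_eq_iff cscale_def matrix_matrix_mult_def sum_distrib_left mult.assoc)

lemma cscale_mult_right: "A ** cscale c B = cscale c (A ** B)"
  by (simp add: vec_eq_iff cscale_def matrix_matrix_mult_def sum_distrib_left algebra_simps)

lemma cscale_sum: "cscale c (sum f S) = (\<Sum>i\<in>S. cscale c (f i))"
  by (simp add: vec_eq_iff cscale_def sum_distrib_left)

lemma kron_mult: "kron A B ** kron C D = kron (A ** C) (B ** D)"
  unfolding vec_eq_iff split_paired_All
  by (simp add: kron_def matrix_matrix_mult_def sum_UNIV_2x2 sum_2 algebra_simps)

lemma kron_entry: "kron A B $ (a,b) $ (c,d) = A $ a $ c * B $ b $ d"
  by (simp add: kron_def)

lemma pauli_entries:
  "pauli 1 $ 1 $ 1 = 0" "pauli 1 $ 1 $ 2 = 1" "pauli 1 $ 2 $ 1 = 1" "pauli 1 $ 2 $ 2 = 0"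
  "pauli 2 $ 1 $ 1 = 0" "pauli 2 $ 1 $ 2 = - \<i>" "pauli 2 $ 2 $ 1 = \<i>" "pauli 2 $ 2 $ 2 = 0"
  "pauli 3 $ 1 $ 1 = 1" "pauli 3 $ 1 $ 2 = 0" "pauli 3 $ 2 $ 1 = 0" "pauli 3 $ 2 $ 2 = -1"
  by (simp_all add: pauli_def sigma1_def sigma2_def sigma3_def)

lemma mat_1_entries:
  "(mat 1 :: qop) $ 1 $ 1 = 1" "(mat 1 :: qop) $ 1 $ 2 = 0"
  "(mat 1 :: qop) $ 2 $ 1 = 0" "(mat 1 :: qop) $ 2 $ 2 = 1"
  by (simp_all add: mat_def)

lemma dot_sigma_entries:
  "dot_sigma k $ 1 $ 1 = of_real (k $ 3)" "dot_sigma k $ 1 $ 2 = of_real (k $ 1) - \<i> * of_real (k $ 2)"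
  "dot_sigma k $ 2 $ 1 = of_real (k $ 1) + \<i> * of_real (k $ 2)" "dot_sigma k $ 2 $ 2 = - of_real (k $ 3)"
  by (simp_all add: dot_sigma_def cscale_def sum_3 pauli_entries)

lemmas qubit_entry_simps = kron_entry pauli_entries mat_1_entries dot_sigma_entries sum_2 sum_3 sum_UNIV_2x2

definition pauli_op :: "real \<Rightarrow> real^3 \<Rightarrow> real^3 \<Rightarrow> real^3^3 \<Rightarrow> qqop" where
  "pauli_op c x y T = cscale (1/4) (cscale (of_real c) (kron (mat 1) (mat 1))
     + (\<Sum>i\<in>UNIV. cscale (of_real (x $ i)) (kron (pauli i) (mat 1)))
     + (\<Sum>j\<in>UNIV. cscale (of_real (y $ j)) (kron (mat 1) (pauli j)))
     + (\<Sum>i\<in>UNIV. \<Sum>j\<in>UNIV. cscale (of_real (T $ i $ j)) (kron (pauli i) (pauli j))))"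

lemma pauli_op_entry:
  "pauli_op c x y T $ p $ q = (1/4) * (of_real c * (if p = q then 1 else 0)
     + (\<Sum>i\<in>UNIV. of_real (x $ i) * kron (pauli i) (mat 1) $ p $ q)
     + (\<Sum>j\<in>UNIV. of_real (y $ j) * kron (mat 1) (pauli j) $ p $ q)
     + (\<Sum>i\<in>UNIV. \<Sum>j\<in>UNIV. of_real (T $ i $ j) * kron (pauli i) (pauli j) $ p $ q))"
  by (auto simp: pauli_op_def cscale_def kron_def mat_def sum_component prod_eq_iff)

lemma pauli_op_diff:
  "pauli_op c x y T - pauli_op c' x' y' T' = pauli_op (c - c') (x - x') (y - y') (T - T')"
  unfolding vec_eq_iff by (simp add: pauli_op_entry sum_3 algebra_simps)

lemma pauli_expansion:
  assumes "hermitian \<rho>" "ctrace \<rho> = 1"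
  shows "\<rho> = pauli_op 1 (bloch_x \<rho>) (bloch_y \<rho>) (corr_T \<rho>)"
proof -
  note H = hermitian_entry[OF assms(1)]
  have diag: "Im (\<rho> $ p $ p) = 0" for p
    using H[of p p] by (metis cnj.simps(2) neg_equal_zero)
  have "Re (\<rho> $ (1,1) $ (1,1)) + Re (\<rho> $ (1,2) $ (1,2)) + Re (\<rho> $ (2,1) $ (2,1)) + Re (\<rho> $ (2,2) $ (2,2)) = 1"
    using assms(2) by (simp add: ctrace_def sum_UNIV_2x2 complex_eq_iff)
  then show ?thesis
    unfolding vec_eq_iff forall_2x2
    using diag[of "(1,1)"] diag[of "(1,2)"] diag[of "(2,1)"] diag[of "(2,2)"]
    by (simp add: pauli_op_entry bloch_x_def bloch_y_def corr_T_def ctrace_def matrix_matrix_mult_def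
       qubit_entry_simps H[of "(1,1)" "(1,2)"] H[of "(1,1)" "(2,1)"] H[of "(1,1)" "(2,2)"]
       H[of "(1,2)" "(2,1)"] H[of "(1,2)" "(2,2)"] H[of "(2,1)" "(2,2)"] complex_eq_iff)
qed

lemma pauli_op_HS_norm_sq:
  "Re (ctrace (pauli_op c x y T ** adjoint (pauli_op c x y T)))
     = (1/4) * (c\<^sup>2 + norm x ^ 2 + norm y ^ 2 + norm T ^ 2)"
  unfolding HS_norm_sq_entries norm_sq_vec norm_sq_matrix
  by (simp add: pauli_op_entry qubit_entry_simps)
    (simp add: power2_eq_square field_simps)

definition dephase :: "real^3 \<Rightarrow> qop \<Rightarrow> qop" where
  "dephase k A = (\<Sum>s\<in>UNIV. proj k s ** A ** proj k s)"

lemma norm_1_components: "norm (k :: real^3) = 1 \<Longrightarrow> k$1 * k$1 + k$2 * k$2 + k$3 * k$3 = 1"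
  by (simp add: norm_eq_1 inner_vec_def sum_3)

lemma dephase_id:
  assumes "norm k = 1"
  shows "dephase k (mat 1) = mat 1"
  using norm_1_components[OF assms]
  unfolding vec_eq_iff forall_2
  by (simp add: dephase_def proj_def cscale_def matrix_matrix_mult_def UNIV_bool
      qubit_entry_simps complex_eq_iff algebra_simps)
    (simp add: field_simps)

lemma dephase_pauli:
  assumes "norm k = 1"
  shows "dephase k (pauli i) = cscale (of_real (k $ i)) (dot_sigma k)"
  using norm_1_components[OF assms] exhaust_3[of i]
  unfolding vec_eq_iff forall_2
  by (auto simp: dephase_def proj_def cscale_def matrix_matrix_mult_def UNIV_bool
      qubit_entry_simps complex_eq_iff algebra_simps)
    (simp_all add: field_simps)

lemma chi_cc_kron: "chi_cc (kron A B) k l = kron (dephase k A) (dephase l B)"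
  unfolding chi_cc_def dephase_def kron_mult
  by (simp add: vec_eq_iff kron_def UNIV_bool algebra_simps)

lemma chi_cc_add: "chi_cc (A + B) k l = chi_cc A k l + chi_cc B k l"
  unfolding chi_cc_def by (simp add: matrix_add_ldistrib matrix_add_rdistrib sum.distrib)

lemma chi_cc_sum: "finite S \<Longrightarrow> chi_cc (sum f S) k l = (\<Sum>i\<in>S. chi_cc (f i) k l)"
proof (induction S rule: finite_induct)
  case empty
  then show ?case by (simp add: chi_cc_def vec_eq_iff matrix_matrix_mult_def)
next
  case (insert i S)
  then show ?case by (simp add: chi_cc_add)
qed

lemma chi_cc_cscale: "chi_cc (cscale c A) k l = cscale c (chi_cc A k l)"
  unfolding chi_cc_def by (simp add: cscale_mult_left cscale_mult_right cscale_sum)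

lemma chi_cc_pauli_op:
  assumes "norm k = 1" "norm l = 1"
  shows "chi_cc (pauli_op c x y T) k l
     = pauli_op c ((x \<bullet> k) *\<^sub>R k) ((y \<bullet> l) *\<^sub>R l) ((k \<bullet> (T *v l)) *\<^sub>R outer k l)"
proof -
  have "chi_cc (pauli_op c x y T) k l = cscale (1/4) (cscale (of_real c) (kron (mat 1) (mat 1))
     + (\<Sum>i\<in>UNIV. cscale (of_real (x $ i)) (kron (cscale (of_real (k $ i)) (dot_sigma k)) (mat 1)))
     + (\<Sum>j\<in>UNIV. cscale (of_real (y $ j)) (kron (mat 1) (cscale (of_real (l $ j)) (dot_sigma l))))
     + (\<Sum>i\<in>UNIV. \<Sum>j\<in>UNIV. cscale (of_real (T $ i $ j))
          (kron (cscale (of_real (k $ i)) (dot_sigma k)) (cscale (of_real (l $ j)) (dot_sigma l)))))"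
    by (simp add: pauli_op_def chi_cc_cscale chi_cc_add chi_cc_sum chi_cc_kron dephase_id dephase_pauli assms)
  then show ?thesis
    unfolding vec_eq_iff forall_2x2
    by (simp add: pauli_op_entry cscale_def outer_def qubit_entry_simps inner_vec_def
        matrix_vector_mult_def complex_eq_iff)
      (simp_all add: field_simps)
qed

definition retained_weight :: "qqop \<Rightarrow> real^3 \<Rightarrow> real^3 \<Rightarrow> real" where
  "retained_weight \<rho> k l =
     (bloch_x \<rho> \<bullet> k)\<^sup>2 + (bloch_y \<rho> \<bullet> l)\<^sup>2 + (k \<bullet> (corr_T \<rho> *v l))\<^sup>2"

lemma HS_dist_sq_chi_cc:
  assumes "hermitian \<rho>" "ctrace \<rho> = 1" "norm k = 1" "norm l = 1"
  shows "HS_dist_sq \<rho> (chi_cc \<rho> k l) = (1/4) *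
     (norm (bloch_x \<rho>) ^ 2 + norm (bloch_y \<rho>) ^ 2 + norm (corr_T \<rho>) ^ 2 - retained_weight \<rho> k l)"
proof -
  define x y T where "x = bloch_x \<rho>" and "y = bloch_y \<rho>" and "T = corr_T \<rho>"
  have \<rho>: "\<rho> = pauli_op 1 x y T"
    unfolding x_def y_def T_def by (rule pauli_expansion[OF assms(1,2)])
  have "\<rho> - chi_cc \<rho> k l
      = pauli_op 0 (x - (x \<bullet> k) *\<^sub>R k) (y - (y \<bullet> l) *\<^sub>R l) (T - (k \<bullet> (T *v l)) *\<^sub>R outer k l)"
    by (subst (2) \<rho>, subst \<rho>) (simp add: chi_cc_pauli_op assms(3,4) pauli_op_diff)
  moreover have "norm (T - (k \<bullet> (T *v l)) *\<^sub>R outer k l) ^ 2 = norm T ^ 2 - (k \<bullet> (T *v l))\<^sup>2"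
    using norm_diff_proj_sq[of "outer k l" T] assms(3,4) by (simp add: norm_outer inner_outer)
  ultimately show ?thesis
    by (simp add: HS_dist_sq_def pauli_op_HS_norm_sq norm_diff_proj_sq assms(3,4)
        retained_weight_def x_def y_def T_def)
qed

lemma lambda_M_eq_gram_max_eig:
  "lambda_M \<rho> l = (bloch_y \<rho> \<bullet> l)\<^sup>2 + gram_max_eig (bloch_x \<rho>) (corr_T \<rho> *v l)"
  by (simp add: lambda_M_def gram_max_eig_def Let_def)

lemma lambda_N_eq_gram_max_eig:
  "lambda_N \<rho> k = (bloch_x \<rho> \<bullet> k)\<^sup>2 + gram_max_eig (bloch_y \<rho>) (transpose (corr_T \<rho>) *v k)"
  by (simp add: lambda_N_def gram_max_eig_def Let_def)

lemma retained_weight_eq_transpose: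
  "retained_weight \<rho> k l =
     (bloch_x \<rho> \<bullet> k)\<^sup>2 + (bloch_y \<rho> \<bullet> l)\<^sup>2 + ((transpose (corr_T \<rho>) *v k) \<bullet> l)\<^sup>2"
  by (simp add: retained_weight_def dot_lmul_matrix)

lemma retained_weight_le_lambda_M: "norm k = 1 \<Longrightarrow> retained_weight \<rho> k l \<le> lambda_M \<rho> l"
  using sq_inner_add_sq_inner_le_gram_max_eig[of k "bloch_x \<rho>" "corr_T \<rho> *v l"]
  by (simp add: retained_weight_def lambda_M_eq_gram_max_eig inner_commute)

lemma lambda_M_attained:
  obtains k where "norm k = 1" "retained_weight \<rho> k l = lambda_M \<rho> l"
proof -
  obtain k where "norm k = 1"
    "(bloch_x \<rho> \<bullet> k)\<^sup>2 + ((corr_T \<rho> *v l) \<bullet> k)\<^sup>2 = gram_max_eig (bloch_x \<rho>) (corr_T \<rho> *v l)"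
    by (rule gram_max_eig_attained)
  then show ?thesis
    by (intro that) (simp_all add: retained_weight_def lambda_M_eq_gram_max_eig inner_commute)
qed

lemma retained_weight_le_lambda_N: "norm l = 1 \<Longrightarrow> retained_weight \<rho> k l \<le> lambda_N \<rho> k"
  using sq_inner_add_sq_inner_le_gram_max_eig[of l "bloch_y \<rho>" "transpose (corr_T \<rho>) *v k"]
  by (simp add: retained_weight_eq_transpose lambda_N_eq_gram_max_eig inner_commute)

lemma lambda_N_attained:
  obtains l where "norm l = 1" "retained_weight \<rho> k l = lambda_N \<rho> k"
proof -
  obtain l where "norm l = 1" "(bloch_y \<rho> \<bullet> l)\<^sup>2 + ((transpose (corr_T \<rho>) *v k) \<bullet> l)\<^sup>2
      = gram_max_eig (bloch_y \<rho>) (transpose (corr_T \<rho>) *v k)"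
    by (rule gram_max_eig_attained)
  then show ?thesis
    by (intro that) (simp_all add: retained_weight_eq_transpose lambda_N_eq_gram_max_eig)
qed

lemma continuous_on_lambda_M: "continuous_on S (lambda_M \<rho>)"
  unfolding lambda_M_eq_gram_max_eig[abs_def] gram_max_eig_def by (intro continuous_intros)

lemma partial_maxima_swap:
  fixes F :: "'a \<Rightarrow> 'b \<Rightarrow> real"
  assumes f: "\<And>k l. k \<in> A \<Longrightarrow> l \<in> B \<Longrightarrow> F k l \<le> f l" "\<And>l. l \<in> B \<Longrightarrow> \<exists>k\<in>A. F k l = f l"
    and g: "\<And>k l. k \<in> A \<Longrightarrow> l \<in> B \<Longrightarrow> F k l \<le> g k" "\<And>k. k \<in> A \<Longrightarrow> \<exists>l\<in>B. F k l = g k"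
    and l0: "l0 \<in> B" "\<And>l. l \<in> B \<Longrightarrow> f l \<le> f l0"
  obtains k0 where "k0 \<in> A" "g k0 = f l0" "\<And>k. k \<in> A \<Longrightarrow> g k \<le> g k0"
proof -
  obtain k0 where "k0 \<in> A" "F k0 l0 = f l0" using f(2) l0(1) by blast
  have le: "g k \<le> f l0" if "k \<in> A" for k
    using g(2)[OF that] f(1)[OF that] l0(2) by (metis order_trans)
  have "f l0 \<le> g k0" using g(1)[OF \<open>k0 \<in> A\<close> l0(1)] \<open>F k0 l0 = f l0\<close> by simp
  with le[OF \<open>k0 \<in> A\<close>] have "g k0 = f l0" by simp
  with \<open>k0 \<in> A\<close> le show ?thesis by (metis that)
qed

lemma G_eq_max_retained_weight:
  assumes "two_qubit_state \<rho>" "norm k0 = 1" "norm l0 = 1"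
    and max: "\<And>k l. norm k = 1 \<Longrightarrow> norm l = 1 \<Longrightarrow> retained_weight \<rho> k l \<le> retained_weight \<rho> k0 l0"
  shows "G \<rho> = (1/4) * (norm (bloch_x \<rho>) ^ 2 + norm (bloch_y \<rho>) ^ 2 + norm (corr_T \<rho>) ^ 2
                        - retained_weight \<rho> k0 l0)"
proof -
  have herm: "hermitian \<rho>" "ctrace \<rho> = 1"
    using assms(1) by (auto simp: two_qubit_state_def psd_def)
  have dist: "HS_dist \<rho> (chi_cc \<rho> k l) ^ 2 = HS_dist_sq \<rho> (chi_cc \<rho> k l)" for k l
    by (simp add: HS_dist_def HS_dist_sq_nonneg)
  have "HS_dist_sq \<rho> (chi_cc \<rho> k0 l0) \<in> {HS_dist_sq \<rho> (chi_cc \<rho> k l) | k l. norm k = 1 \<and> norm l = 1}"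
    using assms(2,3) by blast
  note attained = this[unfolded HS_dist_sq_chi_cc[OF herm assms(2,3)]]
  show ?thesis
    unfolding G_def dist
    by (rule cInf_eq_minimum[OF attained]) (auto simp: HS_dist_sq_chi_cc herm intro!: max)
qed

theorem mainTheorem1:
  fixes \<rho> :: qqop
  assumes "two_qubit_state \<rho>"
  defines "S \<equiv> {v :: real^3. norm v = 1}"
  shows "(\<exists>l\<in>S. lambda_M \<rho> l = (SUP l'\<in>S. lambda_M \<rho> l'))
       \<and> (\<exists>k\<in>S. lambda_N \<rho> k = (SUP k'\<in>S. lambda_N \<rho> k'))
       \<and> (SUP l\<in>S. lambda_M \<rho> l) = (SUP k\<in>S. lambda_N \<rho> k)
       \<and> G \<rho> = (1/4) * (norm (bloch_x \<rho>) ^ 2 + norm (bloch_y \<rho>) ^ 2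
                  + (\<Sum>i\<in>UNIV. \<Sum>j\<in>UNIV. (corr_T \<rho> $ i $ j)^2)
                  - (SUP l\<in>S. lambda_M \<rho> l))"
proof -
  have "S = sphere 0 1" "axis 1 1 \<in> S"
    by (auto simp: S_def norm_axis_1)
  then obtain l0 where l0: "l0 \<in> S" "\<And>l. l \<in> S \<Longrightarrow> lambda_M \<rho> l \<le> lambda_M \<rho> l0"
    using continuous_attains_sup[OF _ _ continuous_on_lambda_M] by (metis compact_sphere empty_iff)
  have M_attained: "\<exists>k\<in>S. retained_weight \<rho> k l = lambda_M \<rho> l" for l
    by (rule lambda_M_attained[of \<rho> l]) (auto simp: S_def)
  have N_attained: "\<exists>l\<in>S. retained_weight \<rho> k l = lambda_N \<rho> k" for k
    by (rule lambda_N_attained[of \<rho> k]) (auto simp: S_def)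
  obtain k0 where k0: "k0 \<in> S" "lambda_N \<rho> k0 = lambda_M \<rho> l0"
    "\<And>k. k \<in> S \<Longrightarrow> lambda_N \<rho> k \<le> lambda_N \<rho> k0"
    using partial_maxima_swap[of S S "retained_weight \<rho>" "lambda_M \<rho>" "lambda_N \<rho>" l0]
      retained_weight_le_lambda_M retained_weight_le_lambda_N M_attained N_attained l0
    unfolding S_def by blast
  obtain k1 where k1: "k1 \<in> S" "retained_weight \<rho> k1 l0 = lambda_M \<rho> l0"
    using M_attained by blast
  have "retained_weight \<rho> k l \<le> retained_weight \<rho> k1 l0" if "norm k = 1" "norm l = 1" for k l
    using retained_weight_le_lambda_M[OF that(1), of \<rho> l] l0(2)[of l] that(2) k1(2)
    unfolding S_def by simp
  then have "G \<rho> = (1/4) * (norm (bloch_x \<rho>) ^ 2 + norm (bloch_y \<rho>) ^ 2 + norm (corr_T \<rho>) ^ 2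
                        - lambda_M \<rho> l0)"
    using G_eq_max_retained_weight[OF assms(1), of k1 l0] k1 l0(1) by (simp add: S_def)
  moreover have "(SUP l\<in>S. lambda_M \<rho> l) = lambda_M \<rho> l0"
    by (rule cSup_eq_maximum) (use l0 in auto)
  moreover have "(SUP k\<in>S. lambda_N \<rho> k) = lambda_N \<rho> k0"
    by (rule cSup_eq_maximum) (use k0(1,3) in auto)
  ultimately show ?thesis
    using l0(1) k0(1,2) by (auto simp: norm_sq_matrix)
qed

end
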